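(* Let $\lambda>1$ and $\Lambda>1$, and set $s=1/(\lambda-1)$. For $\nu>0$ and $\Lambda'\in\{1,\Lambda\}$ let $\xi_{\Lambda'}(\nu)$ be the unique positive real root of $\xi^{3}+(1+s)\nu\xi^{2}-\Lambda'\xi-s\nu\Lambda'=0$, and define $$\tilde{\varepsilon}(\nu)=\frac{\frac{\nu}{\lambda-1}\left(\frac{\Lambda}{\xi_1(\nu)\xi_\Lambda(\nu)}+\lambda\right)+\xi_1(\nu)+\xi_\Lambda(\nu)}{\frac{\nu}{\lambda-1}\left(\Lambda+\frac{\Lambda}{\xi_1(\nu)\xi_\Lambda(\nu)}+\lambda-1\right)+\Lambda\xi_1(\nu)+\xi_\Lambda(\nu)}.$$ Then $$\tilde{\varepsilon}(\nu)=\frac{1}{\sqrt{\Lambda}}+\frac{\sqrt{\Lambda}-1}{2\Lambda}\,\nu+O(\nu^{2})\quad(\nu\to0),$$ and $$\tilde{\varepsilon}(\nu)=\frac{\lambda}{\sqrt{\Lambda}+\lambda-1}-\frac{(\lambda-1)^{2}(\sqrt{\Lambda}-1)(\sqrt{\Lambda}+2)}{2\nu\sqrt{\lambda}\,(\sqrt{\Lambda}+\lambda-1)^{2}}+O\!\left(\frac{1}{\nu^{2}}\right)\quad(\nu\to\infty).$$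
   Context: $\tilde{\varepsilon}(\nu)=\varepsilon/\varepsilon_c$ is the normalized applied strain as a function of the dimensionless crack velocity $\nu$ in a minimal viscoelastic (Zener-element) crack model, where $\lambda=E_\infty/E_0$ is the ratio of glassy to rubbery moduli and $\Lambda=L/l$ is the ratio of sheet height to lattice spacing. For $s,\nu,\Lambda'>0$ the cubic defining $\xi_{\Lambda'}$ has exactly one positive real root. *)

theory Defs
  imports "HOL-Analysis.Analysis" "HOL-Library.Landau_Symbols"
begin

definition xi_cubic :: "real \<Rightarrow> real \<Rightarrow> real \<Rightarrow> real \<Rightarrow> real" where
  "xi_cubic lam Lam' nu x =
     (let s = 1 / (lam - 1) in x ^ 3 + (1 + s) * nu * x ^ 2 - Lam' * x - s * nu * Lam')"

definition xi :: "real \<Rightarrow> real \<Rightarrow> real \<Rightarrow> real" where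
  "xi lam Lam' nu = (THE x. x > 0 \<and> xi_cubic lam Lam' nu x = 0)"

definition eps_tilde :: "real \<Rightarrow> real \<Rightarrow> real \<Rightarrow> real" where
  "eps_tilde lam Lam nu =
     (let x1 = xi lam 1 nu; xL = xi lam Lam nu in
      (nu / (lam - 1) * (Lam / (x1 * xL) + lam) + x1 + xL) /
      (nu / (lam - 1) * (Lam + Lam / (x1 * xL) + lam - 1) + Lam * x1 + xL))"

end

theory Submission
  imports Defs "HOL-Real_Asymp.Real_Asymp"
begin

text \<open>Substituting \<open>\<xi> = \<surd>\<Lambda>' \<eta>\<close> shows \<open>\<xi>\<^sub>\<Lambda>\<^sub>'(\<nu>) = \<surd>\<Lambda>' \<xi>\<^sub>1(\<nu>/\<surd>\<Lambda>')\<close>, so everything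
  reduces to the positive root \<open>r = \<xi>\<^sub>1(t)\<close> of \<open>r\<^sup>2 (r + (1+s) t) = r + s t\<close>. Elementary estimates give
  \<open>r = 1 - t/2 + O(t\<^sup>2)\<close> as \<open>t \<rightarrow> 0\<close> and \<open>r = \<surd>(s/(1+s)) + 1/(2(1+s)\<^sup>2 t) + O(1/t\<^sup>2)\<close> as
  \<open>t \<rightarrow> \<infinity>\<close>. First-order expansions \<open>a + b u + O(u\<^sup>2)\<close> at \<open>u \<rightarrow> 0\<^sup>+\<close> are closed under sums,
  products, quotients and rescaling, so they propagate through \<open>\<epsilon>\<close>, a rational function of \<open>\<nu>\<close>,
  \<open>\<xi>\<^sub>1\<close> and \<open>\<xi>\<^sub>\<Lambda>\<close>; for \<open>\<nu> \<rightarrow> \<infinity>\<close> one expands in \<open>u = 1/\<nu>\<close> after multiplying numerator and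
  denominator of \<open>\<epsilon>\<close> by \<open>u\<close>.\<close>

section \<open>The positive root of the cubic\<close>

lemma xi_cubic_eq:
  "s = 1 / (lam - 1) \<Longrightarrow> xi_cubic lam L nu x = x^3 + (1 + s)*nu*x^2 - L*x - s*nu*L"
  by (simp add: xi_cubic_def Let_def)

text \<open>Dividing the cubic by \<open>x\<^sup>2\<close> turns it into \<open>x - L/x - s\<nu>L/x\<^sup>2 = -(1+s)\<nu>\<close>,
  whose left-hand side is strictly increasing for \<open>x > 0\<close>.\<close>
lemma xi_cubic_pos_root_unique:
  assumes "lam > 1" "L > 0" "nu > 0" "a > 0" "b > 0"
    and "xi_cubic lam L nu a = 0" "xi_cubic lam L nu b = 0"
  shows "a = b"
proof -
  define s where "s = 1 / (lam - 1)"
  define g where "g x = x - L/x - s*nu*L/x^2" for x :: real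
  have m: "s*nu*L > 0" using assms by (simp add: s_def)
  have g_less: "g x < g y" if "0 < x" "x < y" for x y
  proof -
    have "L/y < L/x" using that assms(2) by (simp add: divide_strict_left_mono)
    moreover have "s*nu*L/y^2 < s*nu*L/x^2"
      using that m by (simp add: divide_strict_left_mono power_strict_mono)
    ultimately show ?thesis using that unfolding g_def by linarith
  qed
  have g_root: "g x + (1 + s)*nu = 0" if "x > 0" "xi_cubic lam L nu x = 0" for x
  proof -
    have "g x + (1 + s)*nu = xi_cubic lam L nu x / x^2"
      using that(1) unfolding g_def xi_cubic_eq[OF s_def]
      by (simp add: field_simps power2_eq_square power3_eq_cube)
    with that(2) show ?thesis by simp
  qed
  show ?thesis
    using g_less[of a b] g_less[of b a] g_root[OF assms(4,6)] g_root[OF assms(5,7)] assms(4,5)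
    by (cases a b rule: linorder_cases) auto
qed

lemma xi_cubic_has_pos_root:
  assumes "lam > 1" "L > 0" "nu > 0"
  shows "\<exists>x>0. xi_cubic lam L nu x = 0"
proof -
  define s where "s = 1 / (lam - 1)"
  have s: "s > 0" using assms by (simp add: s_def)
  have cont: "continuous_on {0..sqrt L} (xi_cubic lam L nu)"
    unfolding xi_cubic_def Let_def by (intro continuous_intros)
  have at0: "xi_cubic lam L nu 0 < 0"
    using assms s unfolding xi_cubic_eq[OF s_def] by simp
  have "xi_cubic lam L nu (sqrt L) = nu * L"
    using assms unfolding xi_cubic_eq[OF s_def]
    by (simp add: power2_eq_square power3_eq_cube algebra_simps)
  then have at_sqrt: "xi_cubic lam L nu (sqrt L) > 0" using assms by simp
  obtain x where x: "0 \<le> x" "x \<le> sqrt L" "xi_cubic lam L nu x = 0"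
    using IVT'[of "xi_cubic lam L nu" 0 0 "sqrt L", OF _ _ _ cont] at0 at_sqrt assms(2)
    by auto
  with at0 have "x > 0" by (cases "x = 0") auto
  with x show ?thesis by blast
qed

lemma xi_pos_root:
  assumes "lam > 1" "L > 0" "nu > 0"
  shows "xi lam L nu > 0 \<and> xi_cubic lam L nu (xi lam L nu) = 0"
proof -
  have "\<exists>!x. x > 0 \<and> xi_cubic lam L nu x = 0"
    using xi_cubic_has_pos_root[OF assms] xi_cubic_pos_root_unique[OF assms] by blast
  then show ?thesis unfolding xi_def by (rule theI')
qed

lemma xi_eqI:
  assumes "lam > 1" "L > 0" "nu > 0" "x > 0" "xi_cubic lam L nu x = 0"
  shows "xi lam L nu = x"
  using xi_pos_root[OF assms(1-3)] xi_cubic_pos_root_unique[OF assms(1-3)] assms(4,5) by blast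

lemma xi_scale:
  assumes "lam > 1" "L > 0" "nu > 0"
  shows "xi lam L nu = sqrt L * xi lam 1 (nu / sqrt L)"
proof -
  define w where "w = sqrt L"
  define s where "s = 1 / (lam - 1)"
  define r where "r = xi lam 1 (nu / w)"
  have w: "w > 0" "w^2 = L" using assms by (auto simp: w_def)
  have r: "r > 0" "xi_cubic lam 1 (nu / w) r = 0"
    using xi_pos_root[OF assms(1) _ divide_pos_pos[OF assms(3) w(1)]] by (auto simp: r_def)
  have "xi_cubic lam (w^2) nu (w*r) = w^3 * xi_cubic lam 1 (nu / w) r"
    unfolding xi_cubic_eq[OF s_def] using w(1)
    by (simp add: field_simps power2_eq_square power3_eq_cube)
  with r w have "xi_cubic lam L nu (w*r) = 0" by simp
  with xi_eqI[OF assms] w r show ?thesis by (simp add: w_def r_def)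
qed

lemma xi_one_eq:
  assumes "lam > 1" "t > 0" "s = 1 / (lam - 1)"
  shows "(xi lam 1 t)^2 * (xi lam 1 t + (1 + s)*t) = xi lam 1 t + s*t"
proof -
  have "(xi lam 1 t)^2 * (xi lam 1 t + (1 + s)*t) - (xi lam 1 t + s*t)
          = xi_cubic lam 1 t (xi lam 1 t)"
    unfolding xi_cubic_eq[OF assms(3)] by (simp add: field_simps power2_eq_square power3_eq_cube)
  with xi_pos_root[OF assms(1) _ assms(2)] show ?thesis by simp
qed

section \<open>The root for small and for large \<open>t\<close>\<close>

lemma cubic_root_bounds:
  fixes r s t :: real
  assumes s: "s > 0" and t: "t > 0" and r: "r > 0"
    and root: "r^2 * (r + (1 + s)*t) = r + s*t"
  shows "r < 1" "s \<le> (1 + s) * r^2"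
proof -
  have W: "r + (1 + s)*t > 0" using s t r by (simp add: add_pos_pos)
  show "r < 1"
  proof (rule ccontr)
    assume "\<not> r < 1"
    then have "r^2 * (r + (1 + s)*t) \<ge> 1 * (r + (1 + s)*t)"
      using W by (intro mult_right_mono) (auto simp: one_le_power)
    with root t show False by (simp add: algebra_simps)
  qed
  have "s * (r + (1 + s)*t) \<le> (1 + s) * (r + s*t)" using s r t by (simp add: algebra_simps)
  also have "\<dots> = ((1 + s) * r^2) * (r + (1 + s)*t)" using root by simp
  finally show "s \<le> (1 + s) * r^2" using W by (simp add: mult_le_cancel_right_pos)
qed

text \<open>With \<open>D = (r + 1)(r + (1+s)t)\<close> the equation reads \<open>(1 - r) D = t\<close>, and
  \<open>r - (1 - t/2) = t (D - 2) / (2D)\<close> where \<open>D \<ge> s/(1+s)\<close> and \<open>D - 2 = O(t)\<close>.\<close>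
lemma cubic_root_small_t:
  fixes r s t :: real
  assumes s: "s > 0" and t: "t > 0" and r: "r > 0"
    and root: "r^2 * (r + (1 + s)*t) = r + s*t"
  shows "\<bar>r - (1 - t/2)\<bar> \<le> (1 + s)^2 * (3 + 2 * s) / (2 * s^2) * t^2"
proof -
  define m where "m = s / (1 + s)"
  define D where "D = (r + 1) * (r + (1 + s)*t)"
  have m: "m > 0" using s by (simp add: m_def)
  note bounds = cubic_root_bounds[OF s t r root]
  have D_eq: "(1 - r) * D = t"
    using root unfolding D_def by (simp add: algebra_simps power2_eq_square power3_eq_cube)
  have "D \<ge> r" unfolding D_def using r s t by (simp add: algebra_simps add_nonneg_nonneg)
  moreover have "r \<ge> r^2" using bounds r by (simp add: power2_eq_square mult_left_le)
  moreover have "r^2 \<ge> m" using bounds s by (simp add: m_def field_simps)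
  ultimately have D_ge: "D \<ge> m" by linarith
  then have D_pos: "D > 0" using m by linarith
  have "1 - r = t / D" using D_eq D_pos by (simp add: field_simps)
  then have one_minus_r: "1 - r \<le> t / m" using D_ge m t by (simp add: frac_le)
  have "\<bar>D - 2\<bar> \<le> (1 - r)*(r + 2) + (1 + s)*t*(r + 1)"
  proof -
    have "D - 2 = (1 + s)*t*(r + 1) - (1 - r)*(r + 2)" unfolding D_def by (simp add: algebra_simps)
    moreover have "(1 - r)*(r + 2) \<ge> 0" "(1 + s)*t*(r + 1) \<ge> 0" using bounds r s t by simp_all
    ultimately show ?thesis by linarith
  qed
  also have "\<dots> \<le> (t/m)*3 + (1 + s)*t*2"
    using bounds r s t one_minus_r by (intro add_mono mult_mono) auto
  finally have D_near_2: "\<bar>D - 2\<bar> \<le> (3/m + 2*(1 + s))*t" by (simp add: algebra_simps)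
  have "r - (1 - t/2) = t*(D - 2)/(2*D)" using D_eq D_pos by (simp add: field_simps)
  then have "\<bar>r - (1 - t/2)\<bar> = t*\<bar>D - 2\<bar>/(2*D)" using D_pos t by (simp add: abs_mult)
  also have "\<dots> \<le> t*((3/m + 2*(1 + s))*t)/(2*m)"
    using D_near_2 D_ge m t by (intro frac_le mult_left_mono) auto
  also have "\<dots> = (1 + s)^2 * (3 + 2 * s) / (2 * s^2) * t^2"
    using s unfolding m_def by (simp add: field_simps power2_eq_square)
  finally show ?thesis .
qed

text \<open>For large \<open>t\<close> the root tends to \<open>c = \<surd>(s/(1+s))\<close>: multiplied by \<open>1 + s\<close>,
  the equation becomes \<open>E (r\<^sup>2 - c\<^sup>2) = r\<close> with \<open>E = (1+s)(r + (1+s)t) \<ge> (1+s)\<^sup>2 t\<close>.\<close>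
lemma cubic_root_above_limit:
  fixes r s t c :: real
  assumes s: "s > 0" and t: "t > 0" and r: "r > 0"
    and root: "r^2 * (r + (1 + s)*t) = r + s*t"
    and c: "c > 0" "c^2 = s / (1 + s)"
  shows "(1 + s) * (r + (1 + s)*t) * (r^2 - c^2) = r" "c < r" "r - c \<le> 1 / ((1 + s)^2 * t)"
proof -
  define E where "E = (1 + s) * (r + (1 + s)*t)"
  have c2: "(1 + s) * c^2 = s" using c s by (simp add: field_simps)
  have "E * (r^2 - c^2) = (1 + s) * (r^2 * (r + (1 + s)*t)) - ((1 + s) * c^2) * (r + (1 + s)*t)"
    unfolding E_def by (simp add: algebra_simps)
  also have "\<dots> = r" unfolding root c2 by (simp add: algebra_simps)
  finally have E: "E * (r^2 - c^2) = r" .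
  then show "(1 + s) * (r + (1 + s)*t) * (r^2 - c^2) = r" by (simp add: E_def)
  have E_ge: "E \<ge> (1 + s)^2 * t" unfolding E_def using r s by (simp add: power2_eq_square algebra_simps)
  have E_pos: "E > 0" using E_ge s t by (smt (verit) mult_pos_pos zero_less_power)
  have "r^2 - c^2 > 0" using E E_pos r by (metis zero_less_mult_pos)
  then show "c < r" using c r by (smt (verit) power_mono)
  then have EP: "E * (r + c) > 0" using E_pos c by simp
  have "r - c = (E * (r + c)) * (r - c) / (E * (r + c))"
    using EP by (metis less_irrefl nonzero_mult_div_cancel_left)
  also have "\<dots> = r / (E * (r + c))" using E by (simp add: algebra_simps power2_eq_square)
  also have "\<dots> \<le> 1 / E" using E_pos c r by (simp add: divide_simps)
  also have "\<dots> \<le> 1 / ((1 + s)^2 * t)" using E_ge E_pos s t by (intro divide_left_mono) auto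
  finally show "r - c \<le> 1 / ((1 + s)^2 * t)" .
qed

text \<open>With \<open>N = (1+s)t(r - c) - r(r + c)\<close>, which lies in \<open>[-2, 1]\<close>, one has
  \<open>r - c - d/t = (1+s) N / (2(1+s)\<^sup>2 t (r + c) E)\<close> for \<open>d = 1/(2(1+s)\<^sup>2)\<close>.\<close>
lemma cubic_root_large_t:
  fixes r s t c :: real
  assumes s: "s > 0" and t: "t > 0" and r: "r > 0"
    and root: "r^2 * (r + (1 + s)*t) = r + s*t"
    and c: "c > 0" "c^2 = s / (1 + s)"
  shows "\<bar>r - (c + 1 / (2 * (1 + s)^2) * (1/t))\<bar> \<le> 1 / (c * (1 + s)^3) * (1/t)^2"
proof -
  note above = cubic_root_above_limit[OF assms]
  define E where "E = (1 + s) * (r + (1 + s)*t)"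
  define d where "d = 1 / (2 * (1 + s)^2)"
  define N where "N = (1 + s)*t*(r - c) - r*(r + c)"
  define P where "P = 2 * (1 + s)^2 * t * (r + c) * E"
  have E_ge: "E \<ge> (1 + s)^2 * t" unfolding E_def using r s by (simp add: power2_eq_square algebra_simps)
  have P_ge: "P \<ge> 2 * (1 + s)^2 * t * c * ((1 + s)^2 * t)"
    unfolding P_def using above(2) c s t E_ge by (intro mult_mono) auto
  have P_pos: "P > 0" using P_ge s t c by (smt (verit) mult_pos_pos zero_less_power)
  have "P * (r - (c + d*(1/t))) = 2*(1 + s)^2*t*(E*(r^2 - c^2)) - (2*(1 + s)^2*d)*(r + c)*E"
    unfolding P_def using t by (simp add: algebra_simps power2_eq_square)
  also have "\<dots> = 2*(1 + s)^2*t*r - (r + c)*E"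
    using above(1)[folded E_def] s unfolding d_def by simp
  also have "\<dots> = (1 + s) * N" unfolding N_def E_def by (simp add: algebra_simps power2_eq_square)
  finally have "r - (c + d*(1/t)) = (1 + s) * N / P" using P_pos by (simp add: field_simps)
  moreover have N_bound: "\<bar>N\<bar> \<le> 2"
  proof -
    have "(1 + s)*t*(r - c) \<le> (1 + s)*t*(1 / ((1 + s)^2 * t))"
      using above(3) s t by (intro mult_left_mono) auto
    also have "\<dots> \<le> 1" using s t by (simp add: power2_eq_square)
    finally have "(1 + s)*t*(r - c) \<le> 1" .
    moreover have "(1 + s)*t*(r - c) \<ge> 0" "r*(r + c) \<ge> 0" using s t above(2) r c by simp_all
    moreover have "r*(r + c) \<le> 1*2"
      using cubic_root_bounds[OF s t r root] above(2) c r by (intro mult_mono) auto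
    ultimately show ?thesis unfolding N_def by linarith
  qed
  ultimately have "\<bar>r - (c + d*(1/t))\<bar> = (1 + s) * \<bar>N\<bar> / P"
    using P_pos s by (simp add: abs_mult)
  also have "\<dots> \<le> (1 + s) * 2 / (2 * (1 + s)^2 * t * c * ((1 + s)^2 * t))"
    using N_bound P_ge s t c by (intro frac_le mult_left_mono) auto
  also have "\<dots> = ((1 + s) * 2) / (((1 + s) * 2) * (c * (1 + s)^3 * t^2))"
    by (simp add: algebra_simps power2_eq_square power3_eq_cube)
  also have "\<dots> = 1 / (c * (1 + s)^3) * (1/t)^2"
    using s by (simp add: power_one_over)
  finally show ?thesis unfolding d_def .
qed

section \<open>First-order expansions at \<open>0\<^sup>+\<close>\<close>

definition taylor1 :: "(real \<Rightarrow> real) \<Rightarrow> real \<Rightarrow> real \<Rightarrow> bool" where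
  "taylor1 f a b \<longleftrightarrow> (\<lambda>u. f u - (a + b*u)) \<in> O[at_right 0](\<lambda>u. u^2)"

lemma taylor1_by_bound:
  assumes "\<And>u. 0 < u \<Longrightarrow> \<bar>f u - (a + b*u)\<bar> \<le> K * u^2"
  shows "taylor1 f a b"
  unfolding taylor1_def
proof (rule bigoI[of _ K])
  show "\<forall>\<^sub>F u in at_right 0. norm (f u - (a + b*u)) \<le> K * norm ((u::real)^2)"
    using eventually_at_right_less[of "0::real"] by eventually_elim (use assms in auto)
qed

lemma taylor1_cong:
  assumes "taylor1 f a b" "\<And>u. 0 < u \<Longrightarrow> f u = g u"
  shows "taylor1 g a b"
proof -
  have "\<forall>\<^sub>F u in at_right 0. f u - (a + b*u) = g u - (a + b*u)"
    using eventually_at_right_less[of "0::real"] by eventually_elim (simp add: assms(2))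
  then show ?thesis using assms(1) unfolding taylor1_def by (rule landau_o.big.in_cong[THEN iffD1])
qed

lemma taylor1_coeff_cong: "taylor1 f a b \<Longrightarrow> a = a' \<Longrightarrow> b = b' \<Longrightarrow> taylor1 f a' b'"
  by simp

lemma taylor1_const: "taylor1 (\<lambda>_. c) c 0"
  by (simp add: taylor1_def)

lemma taylor1_id: "taylor1 (\<lambda>u. u) 0 1"
  by (simp add: taylor1_def)

lemma taylor1_linear: "taylor1 (\<lambda>u. a + b*u) a b"
  by (simp add: taylor1_def)

lemma taylor1_add:
  assumes "taylor1 f a b" "taylor1 g c d"
  shows "taylor1 (\<lambda>u. f u + g u) (a + c) (b + d)"
proof -
  have "(\<lambda>u. (f u - (a + b*u)) + (g u - (c + d*u))) \<in> O[at_right 0](\<lambda>u. u^2)"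
    using assms unfolding taylor1_def by (rule sum_in_bigo(1))
  then show ?thesis unfolding taylor1_def by (simp add: algebra_simps)
qed

lemma taylor1_bigo_1:
  assumes "taylor1 f a b"
  shows "f \<in> O[at_right 0](\<lambda>_. 1)"
proof -
  have "(\<lambda>u::real. u^2) \<in> O[at_right 0](\<lambda>_. 1)" by real_asymp
  with assms have "(\<lambda>u. f u - (a + b*u)) \<in> O[at_right 0](\<lambda>_. 1)"
    unfolding taylor1_def by (rule landau_o.big_trans)
  moreover have "(\<lambda>u::real. a + b*u) \<in> O[at_right 0](\<lambda>_. 1)" by real_asymp
  ultimately have "(\<lambda>u. (f u - (a + b*u)) + (a + b*u)) \<in> O[at_right 0](\<lambda>_. 1)"
    by (rule sum_in_bigo(1))
  then show ?thesis by simp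
qed

lemma taylor1_mult:
  assumes "taylor1 f a b" "taylor1 g c d"
  shows "taylor1 (\<lambda>u. f u * g u) (a*c) (a*d + b*c)"
proof -
  have "(\<lambda>u. (f u - (a + b*u)) * g u) \<in> O[at_right 0](\<lambda>u. u^2)"
    using assms(1) taylor1_bigo_1[OF assms(2)] unfolding taylor1_def by (rule landau_o.big_1_mult)
  moreover have "(\<lambda>u. (g u - (c + d*u)) * (a + b*u)) \<in> O[at_right 0](\<lambda>u. u^2)"
    using assms(2) taylor1_bigo_1[OF taylor1_linear] unfolding taylor1_def by (rule landau_o.big_1_mult)
  moreover have "(\<lambda>u. b*d*u^2) \<in> O[at_right 0](\<lambda>u::real. u^2)"
    by (rule bigoI[of _ "\<bar>b*d\<bar>"]) (auto simp: abs_mult)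
  ultimately have "(\<lambda>u. (f u - (a + b*u)) * g u + (g u - (c + d*u)) * (a + b*u) + b*d*u^2)
                    \<in> O[at_right 0](\<lambda>u. u^2)"
    by (intro sum_in_bigo)
  then show ?thesis unfolding taylor1_def by (simp add: algebra_simps power2_eq_square)
qed

lemma taylor1_diff:
  assumes "taylor1 f a b" "taylor1 g c d"
  shows "taylor1 (\<lambda>u. f u - g u) (a - c) (b - d)"
proof -
  have "(\<lambda>u. (f u - (a + b*u)) - (g u - (c + d*u))) \<in> O[at_right 0](\<lambda>u. u^2)"
    using assms unfolding taylor1_def by (rule sum_in_bigo(2))
  then show ?thesis unfolding taylor1_def by (simp add: algebra_simps)
qed

lemma taylor1_scale:
  assumes "taylor1 f a b" "k > 0"
  shows "taylor1 (\<lambda>u. f (k*u)) a (b*k)"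
proof -
  have "filterlim (\<lambda>u. k*u) (at_right 0) (at_right (0::real))" using assms(2) by real_asymp
  with assms(1) have "(\<lambda>u. f (k*u) - (a + b*(k*u))) \<in> O[at_right 0](\<lambda>u. (k*u)^2)"
    unfolding taylor1_def by (rule landau_o.big.compose)
  also have "(\<lambda>u. (k*u)^2) \<in> O[at_right 0](\<lambda>u::real. u^2)" using assms(2) by real_asymp
  finally show ?thesis unfolding taylor1_def by (simp add: algebra_simps)
qed

lemma taylor1_tendsto:
  assumes "taylor1 f a b"
  shows "(f \<longlongrightarrow> a) (at_right 0)"
proof -
  have "(\<lambda>u::real. u^2) \<in> o[at_right 0](\<lambda>_. 1)" by real_asymp
  with assms have "(\<lambda>u. f u - (a + b*u)) \<in> o[at_right 0](\<lambda>_. 1)"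
    unfolding taylor1_def by (rule landau_o.big_small_trans)
  then have "((\<lambda>u. f u - (a + b*u)) \<longlongrightarrow> 0) (at_right 0)"
    using smalloD_tendsto by force
  moreover have "((\<lambda>u::real. a + b*u) \<longlongrightarrow> a) (at_right 0)" by real_asymp
  ultimately have "((\<lambda>u. (f u - (a + b*u)) + (a + b*u)) \<longlongrightarrow> 0 + a) (at_right 0)"
    by (rule tendsto_add)
  then show ?thesis by simp
qed

text \<open>The remainder \<open>f - (a/c + e u) g\<close> is \<open>O(u\<^sup>2)\<close> by the product rule, and
  \<open>1/g\<close> stays bounded because \<open>g \<rightarrow> c \<noteq> 0\<close>.\<close>
lemma taylor1_divide:
  assumes f: "taylor1 f a b" and g: "taylor1 g c d" and c: "c \<noteq> 0"
  shows "taylor1 (\<lambda>u. f u / g u) (a/c) ((b*c - a*d) / c^2)"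
proof -
  define e where "e = (b*c - a*d) / c^2"
  have "taylor1 (\<lambda>u. f u - (a/c + e*u) * g u) 0 0"
    by (rule taylor1_coeff_cong[OF taylor1_diff[OF f taylor1_mult[OF taylor1_linear g]]])
      (use c in \<open>auto simp: e_def field_simps power2_eq_square\<close>)
  then have rem: "(\<lambda>u. f u - (a/c + e*u) * g u) \<in> O[at_right 0](\<lambda>u. u^2)"
    by (simp add: taylor1_def)
  have lim: "(g \<longlongrightarrow> c) (at_right 0)" using g by (rule taylor1_tendsto)
  have "(\<lambda>u. 1 / g u) \<in> O[at_right 0](\<lambda>_. 1)"
    using tendsto_divide[OF tendsto_const lim c] by (intro bigoI_tendsto[where c = "1/c"]) auto
  with rem have "(\<lambda>u. (f u - (a/c + e*u) * g u) * (1 / g u)) \<in> O[at_right 0](\<lambda>u. u^2)"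
    by (rule landau_o.big_1_mult)
  moreover have "\<forall>\<^sub>F u in at_right 0.
                   (f u - (a/c + e*u) * g u) * (1 / g u) = f u / g u - (a/c + e*u)"
    using tendsto_imp_eventually_ne[OF lim c] by eventually_elim (simp add: field_simps)
  ultimately show ?thesis
    unfolding taylor1_def e_def[symmetric] by (rule landau_o.big.in_cong[THEN iffD1, rotated])
qed

lemma taylor1_at_top:
  assumes "taylor1 (\<lambda>u. f (1/u)) a b"
  shows "(\<lambda>x. f x - (a + b/x)) \<in> O[at_top](\<lambda>x. 1 / x^2)"
proof -
  have "(\<lambda>x. f (1 / inverse x) - (a + b * inverse x)) \<in> O[at_top](\<lambda>x. (inverse x)^2)"
    using assms unfolding taylor1_def by (rule landau_o.big.compose[OF _ filterlim_inverse_at_right_top])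
  then show ?thesis by (simp add: inverse_eq_divide power_one_over)
qed

section \<open>Expansions of \<open>\<xi>\<close> and \<open>\<epsilon>\<close>\<close>

lemma taylor1_xi_one_at_0:
  assumes "lam > 1"
  shows "taylor1 (xi lam 1) 1 (-1/2)"
proof -
  define s where "s = 1 / (lam - 1)"
  have s: "s > 0" using assms by (simp add: s_def)
  show ?thesis
  proof (rule taylor1_by_bound)
    fix u :: real assume u: "0 < u"
    have "xi lam 1 u > 0" using xi_pos_root[OF assms _ u] by simp
    from cubic_root_small_t[OF s u this xi_one_eq[OF assms u s_def]]
    show "\<bar>xi lam 1 u - (1 + -1/2 * u)\<bar> \<le> (1 + s)^2 * (3 + 2 * s) / (2 * s^2) * u^2"
      by simp
  qed
qed

lemma taylor1_xi_one_at_infinity: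
  assumes "lam > 1"
  shows "taylor1 (\<lambda>u. xi lam 1 (1/u)) (1 / sqrt lam) ((lam - 1)^2 / (2 * lam^2))"
proof -
  define s where "s = 1 / (lam - 1)"
  define c where "c = 1 / sqrt lam"
  have s: "s > 0" using assms by (simp add: s_def)
  have c: "c > 0" "c^2 = s / (1 + s)"
    using assms by (auto simp: c_def s_def power_divide field_simps)
  have d: "1 / (2 * (1 + s)^2) = (lam - 1)^2 / (2 * lam^2)"
    using assms unfolding s_def by (simp add: field_simps power2_eq_square)
  show ?thesis
  proof (rule taylor1_by_bound)
    fix u :: real assume u: "0 < u"
    then have t: "1/u > 0" by simp
    have "xi lam 1 (1/u) > 0" using xi_pos_root[OF assms _ t] by simp
    from cubic_root_large_t[OF s t this xi_one_eq[OF assms t s_def] c]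
    show "\<bar>xi lam 1 (1/u) - (1 / sqrt lam + (lam - 1)^2 / (2 * lam^2) * u)\<bar>
            \<le> 1 / (c * (1 + s)^3) * u^2"
      unfolding d c_def by simp
  qed
qed

lemma taylor1_xi_at_0:
  assumes "lam > 1" "L > 0"
  shows "taylor1 (xi lam L) (sqrt L) (-1/2)"
proof -
  have "taylor1 (\<lambda>u. sqrt L * xi lam 1 (1 / sqrt L * u))
          (sqrt L * 1) (sqrt L * (-1/2 * (1 / sqrt L)) + 0 * 1)"
    using assms by (intro taylor1_mult[OF taylor1_const] taylor1_scale[OF taylor1_xi_one_at_0]) auto
  then have "taylor1 (\<lambda>u. sqrt L * xi lam 1 (1 / sqrt L * u)) (sqrt L) (-1/2)"
    by (rule taylor1_coeff_cong) (use assms in auto)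
  moreover have "sqrt L * xi lam 1 (1 / sqrt L * u) = xi lam L u" if "u > 0" for u
    using xi_scale[OF assms that] by simp
  ultimately show ?thesis by (rule taylor1_cong)
qed

lemma taylor1_xi_at_infinity:
  assumes "lam > 1" "L > 0"
  shows "taylor1 (\<lambda>u. xi lam L (1/u)) (sqrt L / sqrt lam) (L * (lam - 1)^2 / (2 * lam^2))"
proof -
  have "taylor1 (\<lambda>u. sqrt L * xi lam 1 (1 / (sqrt L * u)))
          (sqrt L * (1 / sqrt lam)) (sqrt L * ((lam - 1)^2 / (2 * lam^2) * sqrt L) + 0 * (1 / sqrt lam))"
    using assms taylor1_scale[OF taylor1_xi_one_at_infinity[OF assms(1)], of "sqrt L"]
    by (intro taylor1_mult[OF taylor1_const]) auto
  then have "taylor1 (\<lambda>u. sqrt L * xi lam 1 (1 / (sqrt L * u)))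
               (sqrt L / sqrt lam) (L * (lam - 1)^2 / (2 * lam^2))"
    by (rule taylor1_coeff_cong) (use assms in auto)
  moreover have "sqrt L * xi lam 1 (1 / (sqrt L * u)) = xi lam L (1/u)" if "u > 0" for u
    using xi_scale[OF assms, of "1/u"] that assms by (simp add: mult.commute)
  ultimately show ?thesis by (rule taylor1_cong)
qed

lemma taylor1_xi_prod_inverse_at_0:
  assumes lam: "lam > 1" and Lam: "Lam > 0"
  shows "taylor1 (\<lambda>u. Lam / (xi lam 1 u * xi lam Lam u)) (sqrt Lam) ((1 + sqrt Lam) / 2)"
proof -
  have XY: "taylor1 (\<lambda>u. xi lam 1 u * xi lam Lam u) (sqrt Lam) (-(1 + sqrt Lam) / 2)"
    by (rule taylor1_coeff_cong[OF taylor1_mult[OF taylor1_xi_one_at_0[OF lam] taylor1_xi_at_0[OF lam Lam]]])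
      auto
  show ?thesis
    by (rule taylor1_coeff_cong[OF taylor1_divide[OF taylor1_const XY]])
      (use Lam in \<open>auto simp: field_simps power2_eq_square\<close>)
qed

lemma eps_tilde_slope_at_0_eq:
  fixes w q :: real
  assumes "w > 0" "q > 0"
  shows "(((w + (q + 1))/q - 1) * (w^2 + w) - (1 + w) * ((w^2 + w + (q + 1) - 1)/q - (w^2 + 1)/2))
           / (w^2 + w)^2 = (w - 1) / (2 * w^2)"
proof -
  have num: "((w + (q + 1))/q - 1) * (w^2 + w) - (1 + w) * ((w^2 + w + (q + 1) - 1)/q - (w^2 + 1)/2)
               = (1 + w) * (w - 1) * (w + 1) / 2"
    using assms by (simp add: field_simps power2_eq_square)
  have "w^2 + w = w * (1 + w)" by (simp add: power2_eq_square algebra_simps)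
  moreover have "w \<noteq> 0" "w + w * w \<noteq> 0" using assms by (smt (verit) mult_pos_pos)+
  ultimately show ?thesis
    unfolding num by (simp add: field_simps) (simp add: algebra_simps power2_eq_square)
qed

lemma taylor1_eps_tilde_at_0:
  assumes lam: "lam > 1" and Lam: "Lam > 1"
  shows "taylor1 (eps_tilde lam Lam) (1 / sqrt Lam) ((sqrt Lam - 1) / (2 * Lam))"
proof -
  define w where "w = sqrt Lam"
  define q where "q = lam - 1"
  have w: "w > 1" "Lam = w^2" using Lam by (auto simp: w_def)
  have q: "q > 0" "lam = q + 1" using lam by (auto simp: q_def)
  note X = taylor1_xi_one_at_0[OF lam]
  have "Lam > 0" using Lam by simp
  note Y = taylor1_xi_at_0[OF lam this, folded w_def]
  note I = taylor1_xi_prod_inverse_at_0[OF lam \<open>Lam > 0\<close>, folded w_def]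
  have U: "taylor1 (\<lambda>u. u / (lam - 1)) 0 (1/q)" by (simp add: taylor1_def q_def)
  have N: "taylor1 (\<lambda>u. u / (lam - 1) * (Lam / (xi lam 1 u * xi lam Lam u) + lam)
                           + xi lam 1 u + xi lam Lam u)
             (1 + w) ((w + lam)/q - 1)"
    by (rule taylor1_coeff_cong[OF taylor1_add[OF taylor1_add[OF
          taylor1_mult[OF U taylor1_add[OF I taylor1_const]] X] Y]])
      (use q in \<open>auto simp: field_simps\<close>)
  have D: "taylor1 (\<lambda>u. u / (lam - 1) * (Lam + Lam / (xi lam 1 u * xi lam Lam u) + lam - 1)
                           + Lam * xi lam 1 u + xi lam Lam u)
             (Lam + w) ((Lam + w + lam - 1)/q - (Lam + 1)/2)"
    by (rule taylor1_coeff_cong[OF taylor1_add[OF taylor1_add[OF taylor1_mult[OF U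
          taylor1_diff[OF taylor1_add[OF taylor1_add[OF taylor1_const I] taylor1_const] taylor1_const]]
          taylor1_mult[OF taylor1_const X]] Y]])
      (use q in \<open>auto simp: field_simps\<close>)
  have "Lam + w \<noteq> 0" using Lam w(1) by linarith
  from taylor1_divide[OF N D this] have "taylor1 (eps_tilde lam Lam) ((1 + w) / (Lam + w))
      ((((w + lam)/q - 1) * (Lam + w) - (1 + w) * ((Lam + w + lam - 1)/q - (Lam + 1)/2)) / (Lam + w)^2)"
    unfolding eps_tilde_def Let_def .
  then show ?thesis
  proof (rule taylor1_coeff_cong)
    have "Lam + w = w * (1 + w)" using w by (simp add: power2_eq_square algebra_simps)
    then show "(1 + w) / (Lam + w) = 1 / sqrt Lam" unfolding w_def[symmetric] using w by simp
    show "(((w + lam)/q - 1) * (Lam + w) - (1 + w) * ((Lam + w + lam - 1)/q - (Lam + 1)/2))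
            / (Lam + w)^2 = (sqrt Lam - 1) / (2 * Lam)"
      unfolding w_def[symmetric] w(2) q(2) using eps_tilde_slope_at_0_eq w q by simp
  qed
qed

lemma taylor1_xi_prod_inverse_at_infinity:
  assumes lam: "lam > 1" and Lam: "Lam > 0"
  shows "taylor1 (\<lambda>u. Lam / (xi lam 1 (1/u) * xi lam Lam (1/u)))
           (sqrt Lam * lam) (-((lam - 1)^2 * sqrt Lam * (sqrt Lam + 1)) / (2 * sqrt lam))"
proof -
  define w where "w = sqrt Lam"
  define r where "r = sqrt lam"
  define c where "c = 1 / r"
  define d where "d = (lam - 1)^2 / (2 * lam^2)"
  have w: "w > 0" "Lam = w^2" using Lam by (auto simp: w_def)
  have r: "r > 1" "lam = r^2" using lam by (auto simp: r_def)
  have X: "taylor1 (\<lambda>u. xi lam 1 (1/u)) c d"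
    using taylor1_xi_one_at_infinity[OF lam] by (simp add: c_def d_def r_def)
  have Y: "taylor1 (\<lambda>u. xi lam Lam (1/u)) (w * c) (Lam * d)"
    using taylor1_xi_at_infinity[OF lam Lam] by (simp add: c_def d_def r_def w_def)
  have XY: "taylor1 (\<lambda>u. xi lam 1 (1/u) * xi lam Lam (1/u)) (w/lam) (c*d*w*(w + 1))"
    by (rule taylor1_coeff_cong[OF taylor1_mult[OF X Y]])
      (use w r in \<open>auto simp: c_def power2_eq_square field_simps\<close>)
  show ?thesis
  proof (rule taylor1_coeff_cong[OF taylor1_divide[OF taylor1_const XY]])
    show "w / lam \<noteq> 0" using w r by simp
    show "Lam / (w / lam) = sqrt Lam * lam"
      unfolding w(2) w_def[symmetric] using w r by (simp add: field_simps power2_eq_square)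
    show "(0 * (w / lam) - Lam * (c * d * w * (w + 1))) / (w / lam)^2
            = -((lam - 1)^2 * sqrt Lam * (sqrt Lam + 1)) / (2 * sqrt lam)"
      unfolding w(2) c_def d_def w_def[symmetric] r_def[symmetric]
      using w r by (simp add: field_simps power2_eq_square)
  qed
qed

lemma eps_tilde_inverse:
  assumes "u > 0"
  shows "eps_tilde lam Lam (1/u) =
    (1/(lam - 1) * (Lam / (xi lam 1 (1/u) * xi lam Lam (1/u)) + lam)
       + u * (xi lam 1 (1/u) + xi lam Lam (1/u))) /
    (1/(lam - 1) * (Lam + Lam / (xi lam 1 (1/u) * xi lam Lam (1/u)) + lam - 1)
       + u * (Lam * xi lam 1 (1/u) + xi lam Lam (1/u)))"
proof -
  have scale: "1/u / (lam - 1) * A + B = (1/(lam - 1) * A + u * B) / u" for A B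
    using assms by (cases "lam = 1") (simp_all add: field_simps)
  have "(1/u / (lam - 1) * A + B) / (1/u / (lam - 1) * C + E)
          = (1/(lam - 1) * A + u * B) / (1/(lam - 1) * C + u * E)" for A B C E
    unfolding scale using assms by (simp add: divide_divide_eq_left)
  then show ?thesis unfolding eps_tilde_def Let_def by (simp add: add.assoc)
qed

lemma eps_tilde_slope_at_infinity_eq:
  fixes w q r :: real
  assumes "w > 0" "q > 0" "r > 0"
  shows "((w + 1) / r * (1 - q*w/2) * ((w + 1) * (w + q) / q)
            - (q + 1) * (w + 1) / q * (w * (w + 1) / r * (1 - q/2))) / ((w + 1) * (w + q) / q)^2
         = -(q^2 * (w - 1) * (w + 2) / (2 * r * (w + q)^2))"
proof -
  define P R where "P = w + 1" and "R = w + q"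
  have PR: "P > 0" "R > 0" using assms by (auto simp: P_def R_def)
  have "P / r * (1 - q*w/2) * (P * R / q) - (q + 1) * P / q * (w * P / r * (1 - q/2))
        = P^2 / (r*q) * (R * (1 - q*w/2) - (q + 1) * w * (1 - q/2))"
    using assms by (simp add: field_simps power2_eq_square)
  also have "R * (1 - q*w/2) - (q + 1) * w * (1 - q/2) = -(q * (w - 1) * (w + 2)) / 2"
    by (simp add: R_def field_simps)
  finally have num: "P / r * (1 - q*w/2) * (P * R / q) - (q + 1) * P / q * (w * P / r * (1 - q/2))
                       = P^2 / (r*q) * (-(q * (w - 1) * (w + 2)) / 2)" .
  show ?thesis
    unfolding P_def[symmetric] R_def[symmetric] num using PR assms by (simp add: field_simps power2_eq_square)
qed

lemma taylor1_eps_tilde_at_infinity: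
  assumes lam: "lam > 1" and Lam: "Lam > 1"
  shows "taylor1 (\<lambda>u. eps_tilde lam Lam (1/u)) (lam / (sqrt Lam + lam - 1))
           (-((lam - 1)^2 * (sqrt Lam - 1) * (sqrt Lam + 2) / (2 * sqrt lam * (sqrt Lam + lam - 1)^2)))"
proof -
  define w where "w = sqrt Lam"
  define r where "r = sqrt lam"
  define q where "q = lam - 1"
  define X where "X u = xi lam 1 (1/u)" for u
  define Y where "Y u = xi lam Lam (1/u)" for u
  have w: "w > 1" "Lam = w^2" using Lam by (auto simp: w_def)
  have r: "r > 1" "lam = r^2" using lam by (auto simp: r_def)
  have q: "q > 0" "lam = q + 1" using lam by (auto simp: q_def)
  have X: "taylor1 X (1/r) (q^2 / (2 * lam^2))"
    using taylor1_xi_one_at_infinity[OF lam] by (simp add: X_def[abs_def] r_def q_def)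
  have Y: "taylor1 Y (w/r) (Lam * (q^2 / (2 * lam^2)))"
    using taylor1_xi_at_infinity[OF lam, of Lam] Lam by (simp add: Y_def[abs_def] r_def q_def w_def)
  have I: "taylor1 (\<lambda>u. Lam / (X u * Y u)) (w * lam) (-(q^2 * w * (w + 1)) / (2 * r))"
    using taylor1_xi_prod_inverse_at_infinity[OF lam] Lam
    by (simp add: X_def[abs_def] Y_def[abs_def] r_def q_def w_def)
  have N: "taylor1 (\<lambda>u. 1/q * (Lam / (X u * Y u) + lam) + u * (X u + Y u))
             (lam * (w + 1) / q) ((w + 1) / r * (1 - q*w/2))"
    by (rule taylor1_coeff_cong[OF taylor1_add[OF
          taylor1_mult[OF taylor1_const taylor1_add[OF I taylor1_const]]
          taylor1_mult[OF taylor1_id taylor1_add[OF X Y]]]])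
      (use q r in \<open>auto simp: q_def[symmetric] field_simps power2_eq_square\<close>)
  have D: "taylor1 (\<lambda>u. 1/q * (Lam + Lam / (X u * Y u) + lam - 1) + u * (Lam * X u + Y u))
             ((w + 1) * (w + q) / q) (w * (w + 1) / r * (1 - q/2))"
    by (rule taylor1_coeff_cong[OF taylor1_add[OF taylor1_mult[OF taylor1_const
          taylor1_diff[OF taylor1_add[OF taylor1_add[OF taylor1_const I] taylor1_const] taylor1_const]]
          taylor1_mult[OF taylor1_id taylor1_add[OF taylor1_mult[OF taylor1_const X] Y]]]])
      (use q w r in \<open>auto simp: q_def[symmetric] field_simps power2_eq_square\<close>)
  have "(w + 1) * (w + q) / q \<noteq> 0" using w q by simp
  from taylor1_divide[OF N D this]
  have "taylor1 (\<lambda>u. eps_tilde lam Lam (1/u)) (lam * (w + 1) / q / ((w + 1) * (w + q) / q))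
          (((w + 1) / r * (1 - q*w/2) * ((w + 1) * (w + q) / q)
            - lam * (w + 1) / q * (w * (w + 1) / r * (1 - q/2))) / ((w + 1) * (w + q) / q)^2)"
    by (rule taylor1_cong) (simp add: eps_tilde_inverse X_def Y_def q_def)
  then have "taylor1 (\<lambda>u. eps_tilde lam Lam (1/u)) (lam / (w + q))
               (-(q^2 * (w - 1) * (w + 2) / (2 * r * (w + q)^2)))"
  proof (rule taylor1_coeff_cong)
    show "lam * (w + 1) / q / ((w + 1) * (w + q) / q) = lam / (w + q)"
      using w q by (simp add: divide_simps)
    show "((w + 1) / r * (1 - q*w/2) * ((w + 1) * (w + q) / q)
            - lam * (w + 1) / q * (w * (w + 1) / r * (1 - q/2))) / ((w + 1) * (w + q) / q)^2
          = -(q^2 * (w - 1) * (w + 2) / (2 * r * (w + q)^2))"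
      unfolding q(2) using eps_tilde_slope_at_infinity_eq w q r by simp
  qed
  moreover have "w + q = sqrt Lam + lam - 1" by (simp add: w_def q_def)
  ultimately show ?thesis unfolding w_def r_def q_def by simp
qed

theorem theorem2:
  fixes lam Lam :: real
  assumes "lam > 1" and "Lam > 1"
  shows "((\<lambda>nu. eps_tilde lam Lam nu - (1 / sqrt Lam + (sqrt Lam - 1) / (2 * Lam) * nu))
           \<in> O[at_right 0](\<lambda>nu. nu ^ 2)) \<and>
         ((\<lambda>nu. eps_tilde lam Lam nu - (lam / (sqrt Lam + lam - 1)
            - (lam - 1) ^ 2 * (sqrt Lam - 1) * (sqrt Lam + 2)
              / (2 * nu * sqrt lam * (sqrt Lam + lam - 1) ^ 2)))
           \<in> O[at_top](\<lambda>nu. 1 / nu ^ 2))"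
proof
  show "(\<lambda>nu. eps_tilde lam Lam nu - (1 / sqrt Lam + (sqrt Lam - 1) / (2 * Lam) * nu))
          \<in> O[at_right 0](\<lambda>nu. nu ^ 2)"
    using taylor1_eps_tilde_at_0[OF assms] unfolding taylor1_def .
  have reorder: "2 * sqrt lam * (sqrt Lam + lam - 1)^2 * nu = 2 * nu * sqrt lam * (sqrt Lam + lam - 1)^2"
    for nu :: real
    by (simp add: mult_ac)
  from taylor1_at_top[OF taylor1_eps_tilde_at_infinity[OF assms]]
  show "(\<lambda>nu. eps_tilde lam Lam nu - (lam / (sqrt Lam + lam - 1)
            - (lam - 1) ^ 2 * (sqrt Lam - 1) * (sqrt Lam + 2)
              / (2 * nu * sqrt lam * (sqrt Lam + lam - 1) ^ 2)))
          \<in> O[at_top](\<lambda>nu. 1 / nu ^ 2)"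
    by (simp add: reorder)
qed

end
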